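(* Let $L$ be a positive integer, let $n_1,\dots,n_L$ be integers with $1\le n_i\le L$, and put $M=\sum_{i=1}^L n_i$. Let $\mathcal P$ be the set of vectors $\mathbf p=\frac1M\sum_{i=1}^L\mathbf e_i\in\mathbb R^L$ where each $\mathbf e_i\in\{0,1\}^L$ has exactly $n_i$ ones, and let $\mathrm{conv}(\mathcal P)$ be its convex hull. Let $\mathbf e_i^\star\in\{0,1\}^L$ be the vector whose first $n_i$ components are $1$ and remaining $L-n_i$ components are $0$, and set $\mathbf p^\star=\frac1M\sum_{i=1}^L\mathbf e_i^\star$. Then $\mathbf p^\star$ is a probability mass function on $[L]$ and $$H(\mathbf p^\star)=\min_{\mathbf p\in\mathcal P}H(\mathbf p)=\min_{\mathbf p\in\mathrm{conv}(\mathcal P)}H(\mathbf p);$$ moreover every minimizer of $H$ over $\mathrm{conv}(\mathcal P)$ is a permutation of (the components of) $\mathbf p^\star$.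
   Context: $H(\mathbf p)=-\sum_i\mathbf p(i)\log_2\mathbf p(i)$ is the Shannon entropy (with $0\log0=0$). In the paper, $L=2^{x+y}$, $M=3^{x+y}$ and the $n_i$ are the sizes of the classes of input triples with a given arithmetic sum, grouped by the value of the third input; $\mathbf p^\star$ is called the "clumpy" distribution. *)

theory Defs
  imports "HOL-Analysis.Analysis"
begin

text \<open>Vectors in R^L are represented as functions nat => real, components indexed by 1..L
  (and zero outside {1..L}).\<close>

definition entropy :: "nat \<Rightarrow> (nat \<Rightarrow> real) \<Rightarrow> real" where
  "entropy L p = - (\<Sum>j\<in>{1..L}. (if p j = 0 then 0 else p j * log 2 (p j)))"

definition conv_hull :: "(nat \<Rightarrow> real) set \<Rightarrow> (nat \<Rightarrow> real) set" where
  "conv_hull S = {q. \<exists>F c. finite F \<and> F \<noteq> {} \<and> F \<subseteq> S \<and> (\<forall>p\<in>F. 0 \<le> c p) \<and>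
      sum c F = 1 \<and> q = (\<lambda>j. \<Sum>p\<in>F. c p * p j)}"

definition Pset :: "nat \<Rightarrow> (nat \<Rightarrow> nat) \<Rightarrow> (nat \<Rightarrow> real) set" where
  "Pset L n = {(\<lambda>j. (\<Sum>i\<in>{1..L}. indicator (S i) j) / real (\<Sum>i\<in>{1..L}. n i)) | S.
      \<forall>i\<in>{1..L}. S i \<subseteq> {1..L} \<and> card (S i) = n i}"

definition pstar :: "nat \<Rightarrow> (nat \<Rightarrow> nat) \<Rightarrow> (nat \<Rightarrow> real)" where
  "pstar L n = (\<lambda>j. (\<Sum>i\<in>{1..L}. indicator {1..n i} j) / real (\<Sum>i\<in>{1..L}. n i))"

end

theory Submission
  imports Defs "HOL-Combinatorics.Permutations"
begin

text \<open>Up to the factor -1/ln 2, entropy is the sum of the strictly convex function x ln x over the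
  coordinates. On the finite set P, a maximiser of that sum comes from a family S_1, ..., S_L in
  which every S_i consists of positions covered by strictly more sets than every position outside
  S_i: otherwise moving one element of some S_i to a position covered at least as often shifts
  mass 1/M from a smaller coordinate to a larger one, which strictly increases the sum. Relabelling
  the positions by decreasing cover count turns such a family into the initial segments
  {1..n_i}, so the maximiser is a permutation of p*. On conv(P), Jensen's inequality in each
  coordinate bounds the sum by the same maximum, and by strict convexity equality forces the
  convex combination to be concentrated on a single vertex.\<close>

text \<open>Since ln 0 = 0 in Isabelle/HOL, xlnx 0 = 0 with no case distinction.\<close>

definition xlnx :: "real \<Rightarrow> real" where
  "xlnx x = x * ln x"

lemma xlnx_strictly_above_tangent:
  assumes "0 < z" "0 \<le> w" "w \<noteq> z"
  shows "xlnx z + (ln z + 1) * (w - z) < xlnx w"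
proof (cases "w = 0")
  case True
  then show ?thesis using assms by (simp add: xlnx_def algebra_simps)
next
  case False
  then have "0 < w" using assms by simp
  have "0 < z / w" "z / w \<noteq> 1" using \<open>0 < w\<close> assms by simp_all
  then have "ln (z / w) < z / w - 1"
    using ln_le_minus_one ln_eq_minus_one by (fastforce simp: less_le)
  then have "w * ln (z / w) < w * (z / w - 1)" using \<open>0 < w\<close> by simp
  moreover have "w * ln (z / w) = w * ln z - w * ln w"
    using \<open>0 < w\<close> assms by (simp add: ln_div right_diff_distrib)
  moreover have "w * (z / w - 1) = z - w" using \<open>0 < w\<close> by (simp add: field_simps)
  ultimately show ?thesis by (simp add: xlnx_def algebra_simps)
qed

lemma xlnx_above_tangent:
  assumes "0 < z" "0 \<le> w"
  shows "xlnx z + (ln z + 1) * (w - z) \<le> xlnx w"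
  using xlnx_strictly_above_tangent[OF assms] by (cases "w = z") auto

lemma xlnx_increment_less:
  assumes "0 \<le> s" "0 < h" "s + h \<le> t"
  shows "xlnx (s + h) - xlnx s < xlnx (t + h) - xlnx t"
proof -
  have "xlnx (s + h) - xlnx s < (ln (s + h) + 1) * h"
    using xlnx_strictly_above_tangent[of "s + h" s] assms by (simp add: algebra_simps)
  also have "\<dots> \<le> (ln t + 1) * h" using assms by simp
  also have "\<dots> \<le> xlnx (t + h) - xlnx t"
    using xlnx_above_tangent[of t "t + h"] assms by simp
  finally show ?thesis .
qed

lemma xlnx_jensen_gap:
  assumes "finite F" "sum c F = 1" "z = (\<Sum>p\<in>F. c p * w p)"
  shows "(\<Sum>p\<in>F. c p * xlnx (w p)) - xlnx z
    = (\<Sum>p\<in>F. c p * (xlnx (w p) - (xlnx z + (ln z + 1) * (w p - z))))"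
proof -
  have "(\<Sum>p\<in>F. c p * (xlnx z + (ln z + 1) * (w p - z)))
      = (\<Sum>p\<in>F. (xlnx z - (ln z + 1) * z) * c p + (ln z + 1) * (c p * w p))"
    by (rule sum.cong) (simp_all add: algebra_simps)
  also have "\<dots> = (xlnx z - (ln z + 1) * z) * sum c F + (ln z + 1) * (\<Sum>p\<in>F. c p * w p)"
    by (simp add: sum.distrib sum_distrib_left)
  also have "\<dots> = xlnx z" using assms by simp
  finally show ?thesis by (simp add: right_diff_distrib sum_subtractf)
qed

lemma xlnx_jensen:
  assumes "finite F" "\<forall>p\<in>F. 0 \<le> c p" "sum c F = 1" "\<forall>p\<in>F. 0 \<le> w p"
  shows "xlnx (\<Sum>p\<in>F. c p * w p) \<le> (\<Sum>p\<in>F. c p * xlnx (w p))"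
    and "xlnx (\<Sum>p\<in>F. c p * w p) = (\<Sum>p\<in>F. c p * xlnx (w p)) \<Longrightarrow>
      \<forall>p\<in>F. 0 < c p \<longrightarrow> w p = (\<Sum>p\<in>F. c p * w p)"
proof -
  define z where "z = (\<Sum>p\<in>F. c p * w p)"
  have "0 \<le> z" unfolding z_def using assms by (simp add: sum_nonneg)
  have "xlnx z \<le> (\<Sum>p\<in>F. c p * xlnx (w p)) \<and>
    (xlnx z = (\<Sum>p\<in>F. c p * xlnx (w p)) \<longrightarrow> (\<forall>p\<in>F. 0 < c p \<longrightarrow> w p = z))"
  proof (cases "z = 0")
    case True
    then have "\<forall>p\<in>F. c p * w p = 0"
      using sum_nonneg_eq_0_iff[OF assms(1), of "\<lambda>p. c p * w p"] assms unfolding z_def by simp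
    then have "(\<Sum>p\<in>F. c p * xlnx (w p)) = 0" by (intro sum.neutral) (auto simp: xlnx_def)
    then show ?thesis using True \<open>\<forall>p\<in>F. c p * w p = 0\<close> by (auto simp: xlnx_def)
  next
    case False
    then have "0 < z" using \<open>0 \<le> z\<close> by simp
    define gap where "gap p = c p * (xlnx (w p) - (xlnx z + (ln z + 1) * (w p - z)))" for p
    have gap_nonneg: "\<forall>p\<in>F. 0 \<le> gap p"
      unfolding gap_def using xlnx_above_tangent[OF \<open>0 < z\<close>] assms by simp
    have gap_pos: "0 < gap p" if "p \<in> F" "0 < c p" "w p \<noteq> z" for p
      unfolding gap_def using xlnx_strictly_above_tangent[OF \<open>0 < z\<close>] assms that by simp
    have sum_gap: "(\<Sum>p\<in>F. c p * xlnx (w p)) - xlnx z = sum gap F"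
      unfolding gap_def using xlnx_jensen_gap[OF assms(1,3) z_def] .
    show ?thesis
      using sum_gap sum_nonneg[OF gap_nonneg[rule_format]] gap_pos gap_nonneg
        sum_nonneg_eq_0_iff[OF assms(1), of gap] by fastforce
  qed
  then show "xlnx (\<Sum>p\<in>F. c p * w p) \<le> (\<Sum>p\<in>F. c p * xlnx (w p))"
    and "xlnx (\<Sum>p\<in>F. c p * w p) = (\<Sum>p\<in>F. c p * xlnx (w p)) \<Longrightarrow>
      \<forall>p\<in>F. 0 < c p \<longrightarrow> w p = (\<Sum>p\<in>F. c p * w p)"
    unfolding z_def by auto
qed

definition sum_xlnx :: "nat \<Rightarrow> (nat \<Rightarrow> real) \<Rightarrow> real" where
  "sum_xlnx L p = (\<Sum>j\<in>{1..L}. xlnx (p j))"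

lemma entropy_eq_sum_xlnx: "entropy L p = - sum_xlnx L p / ln 2"
proof -
  have "(\<Sum>j\<in>{1..L}. if p j = 0 then 0 else p j * log 2 (p j)) = (\<Sum>j\<in>{1..L}. xlnx (p j) / ln 2)"
    by (intro sum.cong) (auto simp: xlnx_def log_def)
  then show ?thesis unfolding entropy_def sum_xlnx_def by (simp add: sum_divide_distrib)
qed

lemma sum_xlnx_permute: "\<sigma> permutes {1..L} \<Longrightarrow> sum_xlnx L (p \<circ> \<sigma>) = sum_xlnx L p"
  unfolding sum_xlnx_def using sum.permute[of \<sigma> "{1..L}" "\<lambda>j. xlnx (p j)"] by (simp add: comp_def)

lemma sum_xlnx_transfer_less:
  assumes "j \<in> {1..L}" "j' \<in> {1..L}" "j \<noteq> j'" "0 < h" "h \<le> p j" "p j \<le> p j'"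
  shows "sum_xlnx L p < sum_xlnx L (p(j := p j - h, j' := p j' + h))"
proof -
  define q where "q = p(j := p j - h, j' := p j' + h)"
  have split: "(\<Sum>k\<in>{1..L}. xlnx (r k)) = xlnx (r j) + xlnx (r j') + (\<Sum>k\<in>{1..L} - {j, j'}. xlnx (r k))"
    for r using assms(1-3) sum.subset_diff[of "{j, j'}" "{1..L}" "\<lambda>k. xlnx (r k)"] by simp
  have "(\<Sum>k\<in>{1..L} - {j, j'}. xlnx (q k)) = (\<Sum>k\<in>{1..L} - {j, j'}. xlnx (p k))"
    unfolding q_def by (intro sum.cong) auto
  moreover have "xlnx (p j - h + h) - xlnx (p j - h) < xlnx (p j' + h) - xlnx (p j')"
    using assms by (intro xlnx_increment_less) auto
  ultimately show ?thesis
    unfolding q_def [symmetric] sum_xlnx_def using split[of p] split[of q] assms(3)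
    by (simp add: q_def)
qed

definition cover_count :: "nat \<Rightarrow> (nat \<Rightarrow> nat set) \<Rightarrow> nat \<Rightarrow> nat" where
  "cover_count L S j = card {i\<in>{1..L}. j \<in> S i}"

definition admissible :: "nat \<Rightarrow> (nat \<Rightarrow> nat) \<Rightarrow> (nat \<Rightarrow> nat set) \<Rightarrow> bool" where
  "admissible L n S \<longleftrightarrow> (\<forall>i\<in>{1..L}. S i \<subseteq> {1..L} \<and> card (S i) = n i)"

definition pvec :: "nat \<Rightarrow> (nat \<Rightarrow> nat) \<Rightarrow> (nat \<Rightarrow> nat set) \<Rightarrow> nat \<Rightarrow> real" where
  "pvec L n S j = real (cover_count L S j) / real (\<Sum>i\<in>{1..L}. n i)"

lemma sum_indicator_eq_cover_count: "(\<Sum>i\<in>{1..L}. indicator (S i) j :: real) = real (cover_count L S j)"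
proof -
  have "{1..L} \<inter> {i. j \<in> S i} = {i\<in>{1..L}. j \<in> S i}" by auto
  then show ?thesis unfolding cover_count_def indicator_def by simp
qed

lemma Pset_eq: "Pset L n = {pvec L n S | S. admissible L n S}"
  unfolding Pset_def pvec_def admissible_def sum_indicator_eq_cover_count by auto

lemma pstar_eq_pvec: "pstar L n = pvec L n (\<lambda>i. {1..n i})"
  unfolding pstar_def pvec_def sum_indicator_eq_cover_count by simp

lemma admissible_initial_segments: "\<forall>i\<in>{1..L}. n i \<le> L \<Longrightarrow> admissible L n (\<lambda>i. {1..n i})"
  unfolding admissible_def by auto

lemma sum_cover_count:
  assumes "admissible L n S"
  shows "(\<Sum>j\<in>{1..L}. cover_count L S j) = (\<Sum>i\<in>{1..L}. n i)"
proof -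
  have "(\<Sum>j\<in>{1..L}. cover_count L S j) = (\<Sum>j\<in>{1..L}. \<Sum>i\<in>{1..L}. of_bool (j \<in> S i))"
    unfolding cover_count_def by (intro sum.cong) (auto intro: arg_cong[where f=card])
  also have "\<dots> = (\<Sum>i\<in>{1..L}. \<Sum>j\<in>{1..L}. of_bool (j \<in> S i))" by (rule sum.swap)
  also have "\<dots> = (\<Sum>i\<in>{1..L}. n i)"
  proof (rule sum.cong)
    fix i assume "i \<in> {1..L}"
    then have "{1..L} \<inter> {j. j \<in> S i} = S i" and "card (S i) = n i"
      using assms unfolding admissible_def by auto
    then show "(\<Sum>j\<in>{1..L}. of_bool (j \<in> S i)) = n i" by simp
  qed simp
  finally show ?thesis .
qed

lemma sum_pvec:
  assumes "admissible L n S" "0 < (\<Sum>i\<in>{1..L}. n i)"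
  shows "(\<Sum>j\<in>{1..L}. pvec L n S j) = 1"
proof -
  have "(\<Sum>j\<in>{1..L}. pvec L n S j) = real (\<Sum>j\<in>{1..L}. cover_count L S j) / real (\<Sum>i\<in>{1..L}. n i)"
    unfolding pvec_def by (simp add: sum_divide_distrib)
  also have "\<dots> = 1" unfolding sum_cover_count[OF assms(1)] using assms(2) by (metis divide_self of_nat_0_less_iff less_irrefl)
  finally show ?thesis .
qed

lemma initial_segment:
  assumes "A \<subseteq> {1..L}" "\<forall>a\<in>A. \<forall>b\<in>{1..L} - A. a < b"
  shows "A = {1..card A}"
proof
  have "finite A" using assms(1) finite_subset by blast
  show "A \<subseteq> {1..card A}"
  proof
    fix a assume "a \<in> A"
    have "{1..a} \<subseteq> A"
    proof
      fix b assume "b \<in> {1..a}"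
      then have "b \<in> {1..L}" using \<open>a \<in> A\<close> assms(1) by auto
      then show "b \<in> A" using assms(2) \<open>a \<in> A\<close> \<open>b \<in> {1..a}\<close> by (meson DiffI atLeastAtMost_iff not_le)
    qed
    then have "card {1..a} \<le> card A" by (rule card_mono[OF \<open>finite A\<close>])
    then show "a \<in> {1..card A}" using assms(1) \<open>a \<in> A\<close> by auto
  qed
  show "{1..card A} \<subseteq> A"
  proof
    fix b assume b: "b \<in> {1..card A}"
    show "b \<in> A"
    proof (rule ccontr)
      assume "b \<notin> A"
      have "card A \<le> card {1..L}" using assms(1) by (intro card_mono) auto
      then have "b \<in> {1..L} - A" using b \<open>b \<notin> A\<close> by auto
      then have "A \<subseteq> {1..<b}" using assms by auto
      then have "card A \<le> card {1..<b}" by (intro card_mono) auto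
      then show False using b by auto
    qed
  qed
qed

lemma sorting_permutation:
  fixes c :: "nat \<Rightarrow> 'a::linorder"
  obtains \<sigma> where "\<sigma> permutes {1..L}"
    and "\<And>x y. x \<in> {1..L} \<Longrightarrow> y \<in> {1..L} \<Longrightarrow> c y < c x \<Longrightarrow> \<sigma> x < \<sigma> y"
proof -
  \<comment> \<open>ties are broken by position, so that the rank is injective\<close>
  define before where "before x y \<longleftrightarrow> c y < c x \<or> (c x = c y \<and> x < y)" for x y
  define rank where "rank y = Suc (card {x\<in>{1..L}. before x y})" for y
  define \<sigma> where "\<sigma> y = (if y \<in> {1..L} then rank y else y)" for y
  have rank_less: "rank x < rank y" if "x \<in> {1..L}" "before x y" for x y
  proof -
    have "insert x {z\<in>{1..L}. before z x} \<subseteq> {z\<in>{1..L}. before z y}"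
      using that unfolding before_def by auto
    then have "card (insert x {z\<in>{1..L}. before z x}) \<le> card {z\<in>{1..L}. before z y}"
      by (intro card_mono) auto
    then show ?thesis unfolding rank_def by (simp add: before_def)
  qed
  have rank_range: "rank y \<in> {1..L}" if "y \<in> {1..L}" for y
  proof -
    have "card {x\<in>{1..L}. before x y} \<le> card ({1..L} - {y})"
      by (intro card_mono) (auto simp: before_def)
    then show ?thesis unfolding rank_def using that by auto
  qed
  have "inj_on \<sigma> {1..L}"
  proof (rule inj_onI)
    fix x y assume "x \<in> {1..L}" "y \<in> {1..L}" "\<sigma> x = \<sigma> y"
    then show "x = y"
      using rank_less[of x y] rank_less[of y x] unfolding \<sigma>_def before_def
      by (metis less_irrefl linorder_neqE)
  qed
  moreover have "\<sigma> ` {1..L} \<subseteq> {1..L}" using rank_range unfolding \<sigma>_def by auto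
  ultimately have "bij_betw \<sigma> {1..L} {1..L}"
    using endo_inj_surj[of "{1..L}" \<sigma>] by (simp add: bij_betw_def)
  then have "\<sigma> permutes {1..L}" by (rule bij_imp_permutes) (auto simp: \<sigma>_def)
  moreover have "\<sigma> x < \<sigma> y" if "x \<in> {1..L}" "y \<in> {1..L}" "c y < c x" for x y
    using that rank_less[of x y] unfolding \<sigma>_def before_def by simp
  ultimately show ?thesis using that by blast
qed

definition count_separated :: "nat \<Rightarrow> (nat \<Rightarrow> nat set) \<Rightarrow> bool" where
  "count_separated L S \<longleftrightarrow>
    (\<forall>i\<in>{1..L}. \<forall>j\<in>S i. \<forall>j'\<in>{1..L} - S i. cover_count L S j' < cover_count L S j)"

lemma count_separated_image_eq:
  assumes "admissible L n S" "count_separated L S" "\<sigma> permutes {1..L}"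
    and sorted: "\<And>x y. x \<in> {1..L} \<Longrightarrow> y \<in> {1..L} \<Longrightarrow>
      cover_count L S y < cover_count L S x \<Longrightarrow> \<sigma> x < \<sigma> y"
    and "i \<in> {1..L}"
  shows "\<sigma> ` S i = {1..n i}"
proof -
  have "inj \<sigma>" using permutes_inj[OF assms(3)] .
  have Si: "S i \<subseteq> {1..L}" "card (S i) = n i" using assms(1,5) unfolding admissible_def by auto
  have "\<sigma> ` S i \<subseteq> {1..L}" using image_mono[OF Si(1), of \<sigma>] unfolding permutes_image[OF assms(3)] .
  have "\<sigma> x < \<sigma> y" if "x \<in> S i" "y \<in> {1..L} - S i" for x y
  proof -
    have "cover_count L S y < cover_count L S x"
      using assms(2,5) that unfolding count_separated_def by blast
    then show ?thesis using sorted[of x y] Si(1) that by blast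
  qed
  then have "\<forall>a\<in>\<sigma> ` S i. \<forall>b\<in>\<sigma> ` ({1..L} - S i). a < b" by blast
  then have "\<forall>a\<in>\<sigma> ` S i. \<forall>b\<in>{1..L} - \<sigma> ` S i. a < b"
    unfolding image_set_diff[OF \<open>inj \<sigma>\<close>] permutes_image[OF assms(3)] .
  with \<open>\<sigma> ` S i \<subseteq> {1..L}\<close> have "\<sigma> ` S i = {1..card (\<sigma> ` S i)}" by (rule initial_segment)
  also have "card (\<sigma> ` S i) = n i" using Si(2) card_image[OF inj_on_subset[OF \<open>inj \<sigma>\<close> subset_UNIV]] by simp
  finally show ?thesis .
qed

lemma count_separated_imp_pvec_permutes_pstar:
  assumes "admissible L n S" "count_separated L S"
  obtains \<sigma> where "\<sigma> permutes {1..L}" "pvec L n S = pstar L n \<circ> \<sigma>"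
proof -
  obtain \<sigma> where \<sigma>: "\<sigma> permutes {1..L}"
    and sorted: "\<And>x y. x \<in> {1..L} \<Longrightarrow> y \<in> {1..L} \<Longrightarrow>
      cover_count L S y < cover_count L S x \<Longrightarrow> \<sigma> x < \<sigma> y"
    using sorting_permutation[of L "cover_count L S"] by blast
  have "inj \<sigma>" using permutes_inj[OF \<sigma>] .
  have image: "\<sigma> ` S i = {1..n i}" if "i \<in> {1..L}" for i
    using count_separated_image_eq[OF assms \<sigma> sorted that] .
  have "{i\<in>{1..L}. y \<in> S i} = {i\<in>{1..L}. \<sigma> y \<in> {1..n i}}" for y
  proof (cases "y \<in> {1..L}")
    case True
    have "y \<in> S i \<longleftrightarrow> \<sigma> y \<in> {1..n i}" if "i \<in> {1..L}" for i
      using inj_image_mem_iff[OF \<open>inj \<sigma>\<close>, of y "S i"] image[OF that] by simp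
    then show ?thesis by blast
  next
    case False
    have "y \<notin> S i" "\<sigma> y \<notin> {1..n i}" if "i \<in> {1..L}" for i
    proof -
      have "S i \<subseteq> {1..L}" "card (S i) = n i" using assms(1) that unfolding admissible_def by auto
      then have "n i \<le> L" using card_mono[of "{1..L}" "S i"] by simp
      then show "y \<notin> S i" "\<sigma> y \<notin> {1..n i}"
        using False \<open>S i \<subseteq> {1..L}\<close> permutes_not_in[OF \<sigma> False] by auto
    qed
    then show ?thesis by blast
  qed
  then have "pvec L n S = pstar L n \<circ> \<sigma>"
    unfolding pstar_eq_pvec pvec_def cover_count_def by (simp add: fun_eq_iff)
  with \<sigma> show ?thesis by (rule that)
qed

lemma exchange_admissible:
  assumes "admissible L n S" "k \<in> {1..L}" "j \<in> S k" "j' \<in> {1..L} - S k"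
  shows "admissible L n (S(k := insert j' (S k - {j})))"
proof -
  have "S k \<subseteq> {1..L}" "card (S k) = n k" using assms(1,2) unfolding admissible_def by auto
  have "finite (S k)" using \<open>S k \<subseteq> {1..L}\<close> finite_subset by blast
  have "card (insert j' (S k - {j})) = Suc (card (S k - {j}))"
    using \<open>finite (S k)\<close> assms(4) by simp
  also have "\<dots> = n k" using card_Suc_Diff1[OF \<open>finite (S k)\<close> assms(3)] \<open>card (S k) = n k\<close> by simp
  finally have "card (insert j' (S k - {j})) = n k" .
  then show ?thesis using assms \<open>S k \<subseteq> {1..L}\<close> unfolding admissible_def by auto
qed

lemma cover_count_exchange:
  assumes "k \<in> {1..L}" "j \<in> S k" "j' \<notin> S k"
  shows "cover_count L (S(k := insert j' (S k - {j}))) j = cover_count L S j - 1"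
    and "cover_count L (S(k := insert j' (S k - {j}))) j' = cover_count L S j' + 1"
    and "x \<noteq> j \<Longrightarrow> x \<noteq> j' \<Longrightarrow> cover_count L (S(k := insert j' (S k - {j}))) x = cover_count L S x"
proof -
  define S' where "S' = S(k := insert j' (S k - {j}))"
  have "j \<noteq> j'" using assms by auto
  have "{i\<in>{1..L}. j \<in> S' i} = {i\<in>{1..L}. j \<in> S i} - {k}"
    using \<open>j \<noteq> j'\<close> unfolding S'_def by auto
  then show "cover_count L (S(k := insert j' (S k - {j}))) j = cover_count L S j - 1"
    using assms(1,2) unfolding cover_count_def S'_def by simp
  have "{i\<in>{1..L}. j' \<in> S' i} = insert k {i\<in>{1..L}. j' \<in> S i}"
    using assms(1) unfolding S'_def by auto
  then show "cover_count L (S(k := insert j' (S k - {j}))) j' = cover_count L S j' + 1"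
    using assms(3) unfolding cover_count_def S'_def by simp
  assume "x \<noteq> j" "x \<noteq> j'"
  then have "{i\<in>{1..L}. x \<in> S' i} = {i\<in>{1..L}. x \<in> S i}" unfolding S'_def by auto
  then show "cover_count L (S(k := insert j' (S k - {j}))) x = cover_count L S x"
    unfolding cover_count_def S'_def by simp
qed

lemma exchange_sum_xlnx_less:
  assumes "admissible L n S" "0 < (\<Sum>i\<in>{1..L}. n i)"
    and "k \<in> {1..L}" "j \<in> S k" "j' \<in> {1..L} - S k"
    and "cover_count L S j \<le> cover_count L S j'"
  shows "sum_xlnx L (pvec L n S) < sum_xlnx L (pvec L n (S(k := insert j' (S k - {j}))))"
proof -
  define M where "M = real (\<Sum>i\<in>{1..L}. n i)"
  have "0 < M" using assms(2) unfolding M_def by (simp only: of_nat_0_less_iff)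
  have "j \<in> {1..L}" using assms(1,3,4) unfolding admissible_def by blast
  have "j' \<notin> S k" using assms(5) by simp
  note count = cover_count_exchange[where S = S, OF assms(3,4) this]
  have "k \<in> {i\<in>{1..L}. j \<in> S i}" using assms(3,4) by simp
  then have "1 \<le> cover_count L S j" unfolding cover_count_def by (auto simp: Suc_le_eq card_gt_0_iff)
  have "pvec L n (S(k := insert j' (S k - {j})))
      = (pvec L n S)(j := pvec L n S j - 1 / M, j' := pvec L n S j' + 1 / M)"
  proof
    fix x
    have "real (cover_count L S j - 1) / M = real (cover_count L S j) / M - 1 / M"
      using \<open>1 \<le> cover_count L S j\<close> by (simp add: of_nat_diff diff_divide_distrib)
    moreover have "real (cover_count L S j' + 1) / M = real (cover_count L S j') / M + 1 / M"
      by (simp add: add_divide_distrib)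
    ultimately show "pvec L n (S(k := insert j' (S k - {j}))) x
      = ((pvec L n S)(j := pvec L n S j - 1 / M, j' := pvec L n S j' + 1 / M)) x"
      unfolding pvec_def M_def [symmetric] using count assms(5) by auto
  qed
  moreover have "1 / M \<le> pvec L n S j" "pvec L n S j \<le> pvec L n S j'"
    using \<open>0 < M\<close> \<open>1 \<le> cover_count L S j\<close> assms(6) unfolding pvec_def M_def [symmetric]
    by (auto simp: divide_right_mono)
  moreover have "j \<noteq> j'" using assms(4) \<open>j' \<notin> S k\<close> by blast
  ultimately show ?thesis
    using sum_xlnx_transfer_less[of j L j' "1 / M"] \<open>j \<in> {1..L}\<close> assms(5) \<open>0 < M\<close> by auto
qed

lemma finite_Pset: "finite (Pset L n)"
proof -
  have "Pset L n \<subseteq> pvec L n ` (\<Pi>\<^sub>E i\<in>{1..L}. Pow {1..L})"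
  proof
    fix p assume "p \<in> Pset L n"
    then obtain S where S: "admissible L n S" "p = pvec L n S" unfolding Pset_eq by blast
    have "p = pvec L n (restrict S {1..L})"
      unfolding S(2) pvec_def cover_count_def by (simp add: restrict_def cong: conj_cong)
    moreover have "restrict S {1..L} \<in> (\<Pi>\<^sub>E i\<in>{1..L}. Pow {1..L})"
      using S(1) unfolding admissible_def by auto
    ultimately show "p \<in> pvec L n ` (\<Pi>\<^sub>E i\<in>{1..L}. Pow {1..L})" by blast
  qed
  then show ?thesis by (rule finite_subset) (intro finite_imageI finite_PiE; simp)
qed

lemma Pset_nonneg: "p \<in> Pset L n \<Longrightarrow> 0 \<le> p j"
  unfolding Pset_eq pvec_def by (auto simp del: of_nat_sum)

lemma Pset_vanishes_outside: "p \<in> Pset L n \<Longrightarrow> j \<notin> {1..L} \<Longrightarrow> p j = 0"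
  unfolding Pset_eq pvec_def cover_count_def admissible_def by force

lemma pstar_in_Pset: "\<forall>i\<in>{1..L}. n i \<le> L \<Longrightarrow> pstar L n \<in> Pset L n"
  unfolding Pset_eq pstar_eq_pvec using admissible_initial_segments by blast

lemma maximal_imp_count_separated:
  assumes "admissible L n S" "0 < (\<Sum>i\<in>{1..L}. n i)"
    and "\<forall>q\<in>Pset L n. sum_xlnx L q \<le> sum_xlnx L (pvec L n S)"
  shows "count_separated L S"
proof (rule ccontr)
  assume "\<not> count_separated L S"
  then obtain k j j' where exchange: "k \<in> {1..L}" "j \<in> S k" "j' \<in> {1..L} - S k"
    "cover_count L S j \<le> cover_count L S j'"
    unfolding count_separated_def by (auto simp: not_less)
  have "pvec L n (S(k := insert j' (S k - {j}))) \<in> Pset L n"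
    unfolding Pset_eq using exchange_admissible[OF assms(1) exchange(1-3)] by blast
  then show False
    using exchange_sum_xlnx_less[OF assms(1,2) exchange] assms(3) by fastforce
qed

lemma Pset_sum_xlnx_le_pstar:
  assumes "0 < (\<Sum>i\<in>{1..L}. n i)" "\<forall>i\<in>{1..L}. n i \<le> L" "p \<in> Pset L n"
  shows "sum_xlnx L p \<le> sum_xlnx L (pstar L n)"
    and "sum_xlnx L p = sum_xlnx L (pstar L n) \<Longrightarrow> \<exists>\<sigma>. \<sigma> permutes {1..L} \<and> p = pstar L n \<circ> \<sigma>"
proof -
  define m where "m = Max (sum_xlnx L ` Pset L n)"
  have le_m: "\<forall>q\<in>Pset L n. sum_xlnx L q \<le> m"
    unfolding m_def using finite_Pset by simp
  have permutes_if_max: "\<exists>\<sigma>. \<sigma> permutes {1..L} \<and> pvec L n S = pstar L n \<circ> \<sigma>"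
    if "admissible L n S" "sum_xlnx L (pvec L n S) = m" for S
    using count_separated_imp_pvec_permutes_pstar[OF that(1)]
      maximal_imp_count_separated[OF that(1) assms(1)] le_m that(2) by metis
  have "m \<in> sum_xlnx L ` Pset L n"
    unfolding m_def using finite_Pset pstar_in_Pset[OF assms(2)] by (intro Max_in) auto
  then obtain S0 where "admissible L n S0" "sum_xlnx L (pvec L n S0) = m"
    unfolding Pset_eq by blast
  then have m_eq: "m = sum_xlnx L (pstar L n)"
    using permutes_if_max sum_xlnx_permute by metis
  show "sum_xlnx L p \<le> sum_xlnx L (pstar L n)" using le_m assms(3) m_eq by simp
  show "sum_xlnx L p = sum_xlnx L (pstar L n) \<Longrightarrow> \<exists>\<sigma>. \<sigma> permutes {1..L} \<and> p = pstar L n \<circ> \<sigma>"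
    using assms(3) permutes_if_max m_eq unfolding Pset_eq by auto
qed

lemma mem_conv_hull: "p \<in> P \<Longrightarrow> p \<in> conv_hull P"
  unfolding conv_hull_def by (intro CollectI exI[of _ "{p}"] exI[of _ "\<lambda>_. 1"]) auto

lemma sum_xlnx_convex_combination:
  assumes "finite F" "\<forall>p\<in>F. 0 \<le> c p" "sum c F = 1" "\<forall>p\<in>F. \<forall>j. 0 \<le> p j"
  defines "q \<equiv> \<lambda>j. \<Sum>p\<in>F. c p * p j"
  shows "sum_xlnx L q \<le> (\<Sum>p\<in>F. c p * sum_xlnx L p)"
    and "sum_xlnx L q = (\<Sum>p\<in>F. c p * sum_xlnx L p) \<Longrightarrow>
      \<forall>j\<in>{1..L}. \<forall>p\<in>F. 0 < c p \<longrightarrow> p j = q j"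
proof -
  have nonneg: "\<forall>p\<in>F. 0 \<le> p j" for j using assms(4) by blast
  define A where "A j = (\<Sum>p\<in>F. c p * xlnx (p j))" for j
  have jensen: "xlnx (q j) \<le> A j" for j
    unfolding q_def A_def using xlnx_jensen(1)[OF assms(1-3) nonneg] .
  have sum_A: "(\<Sum>j\<in>{1..L}. A j) = (\<Sum>p\<in>F. c p * sum_xlnx L p)"
    unfolding A_def sum_xlnx_def by (simp add: sum_distrib_left) (rule sum.swap)
  have "sum_xlnx L q \<le> (\<Sum>j\<in>{1..L}. A j)"
    unfolding sum_xlnx_def using jensen by (rule sum_mono)
  then show "sum_xlnx L q \<le> (\<Sum>p\<in>F. c p * sum_xlnx L p)" unfolding sum_A .
  assume "sum_xlnx L q = (\<Sum>p\<in>F. c p * sum_xlnx L p)"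
  then have "(\<Sum>j\<in>{1..L}. A j - xlnx (q j)) = 0"
    using sum_A unfolding sum_xlnx_def by (simp add: sum_subtractf)
  then have "\<forall>j\<in>{1..L}. xlnx (q j) = A j"
    using sum_nonneg_eq_0_iff[of "{1..L}" "\<lambda>j. A j - xlnx (q j)"] jensen by simp
  then show "\<forall>j\<in>{1..L}. \<forall>p\<in>F. 0 < c p \<longrightarrow> p j = q j"
    using xlnx_jensen(2)[OF assms(1-3) nonneg] unfolding A_def q_def by simp
qed

lemma sum_xlnx_conv_hull:
  assumes P: "\<forall>p\<in>P. (\<forall>j. 0 \<le> p j) \<and> (\<forall>j. j \<notin> {1..L} \<longrightarrow> p j = 0) \<and> sum_xlnx L p \<le> m"
    and "q \<in> conv_hull P"
  shows "sum_xlnx L q \<le> m" and "sum_xlnx L q = m \<Longrightarrow> q \<in> P"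
proof -
  obtain F c where F: "finite F" "F \<subseteq> P" and c: "\<forall>p\<in>F. 0 \<le> c p" "sum c F = 1"
    and q: "q = (\<lambda>j. \<Sum>p\<in>F. c p * p j)"
    using assms(2) unfolding conv_hull_def by blast
  have "\<forall>p\<in>F. \<forall>j. 0 \<le> p j" using F(2) P by blast
  note jensen = sum_xlnx_convex_combination[OF F(1) c this, of L, folded q]
  have "(\<Sum>p\<in>F. c p * sum_xlnx L p) \<le> (\<Sum>p\<in>F. c p * m)"
    using F(2) P c(1) by (intro sum_mono mult_left_mono) auto
  also have "\<dots> = m" using c(2) by (simp flip: sum_distrib_right)
  finally have sum_le: "(\<Sum>p\<in>F. c p * sum_xlnx L p) \<le> m" .
  with jensen(1) show "sum_xlnx L q \<le> m" by linarith
  assume "sum_xlnx L q = m"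
  with jensen(1) sum_le have "sum_xlnx L q = (\<Sum>p\<in>F. c p * sum_xlnx L p)" by linarith
  then have agree: "\<forall>j\<in>{1..L}. \<forall>p\<in>F. 0 < c p \<longrightarrow> p j = q j" using jensen(2) q by simp
  obtain p0 where "p0 \<in> F" "0 < c p0"
    using c F(1) sum_nonneg_eq_0_iff[OF F(1), of c] by force
  have "q = p0"
  proof
    fix j
    show "q j = p0 j"
    proof (cases "j \<in> {1..L}")
      case True
      then show ?thesis using agree \<open>p0 \<in> F\<close> \<open>0 < c p0\<close> by simp
    next
      case False
      then have vanish: "\<forall>p\<in>F. p j = 0" using F(2) P by blast
      then have "(\<Sum>p\<in>F. c p * p j) = 0" by (intro sum.neutral) simp
      then show ?thesis unfolding q using vanish \<open>p0 \<in> F\<close> by simp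
    qed
  qed
  then show "q \<in> P" using F(2) \<open>p0 \<in> F\<close> by blast
qed

lemma entropy_le_iff: "entropy L p \<le> entropy L q \<longleftrightarrow> sum_xlnx L q \<le> sum_xlnx L p"
  unfolding entropy_eq_sum_xlnx by (simp add: divide_le_cancel)

lemma entropy_eq_iff: "entropy L p = entropy L q \<longleftrightarrow> sum_xlnx L p = sum_xlnx L q"
  unfolding entropy_eq_sum_xlnx by simp

theorem theorem1:
  fixes L :: nat and n :: "nat \<Rightarrow> nat"
  assumes "L \<ge> 1"
    and "\<forall>i\<in>{1..L}. 1 \<le> n i \<and> n i \<le> L"
  shows "(\<forall>j\<in>{1..L}. 0 \<le> pstar L n j) \<and> (\<Sum>j\<in>{1..L}. pstar L n j) = 1
    \<and> entropy L (pstar L n) \<in> entropy L ` Pset L n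
    \<and> (\<forall>p\<in>Pset L n. entropy L (pstar L n) \<le> entropy L p)
    \<and> entropy L (pstar L n) \<in> entropy L ` conv_hull (Pset L n)
    \<and> (\<forall>p\<in>conv_hull (Pset L n). entropy L (pstar L n) \<le> entropy L p)
    \<and> (\<forall>q\<in>conv_hull (Pset L n). entropy L q = entropy L (pstar L n) \<longrightarrow>
         (\<exists>\<sigma>. \<sigma> permutes {1..L} \<and> q = pstar L n \<circ> \<sigma>))"
proof -
  have n_le: "\<forall>i\<in>{1..L}. n i \<le> L" using assms(2) by blast
  have "1 \<le> n 1" "n 1 \<le> (\<Sum>i\<in>{1..L}. n i)" using assms by (auto intro: member_le_sum)
  then have M: "0 < (\<Sum>i\<in>{1..L}. n i)" by linarith
  note pstar_P = pstar_in_Pset[OF n_le]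
  note Pset_max = Pset_sum_xlnx_le_pstar[OF M n_le]
  have P: "\<forall>p\<in>Pset L n. (\<forall>j. 0 \<le> p j) \<and> (\<forall>j. j \<notin> {1..L} \<longrightarrow> p j = 0)
      \<and> sum_xlnx L p \<le> sum_xlnx L (pstar L n)"
    using Pset_nonneg Pset_vanishes_outside Pset_max(1) by blast
  note conv_max = sum_xlnx_conv_hull[OF P]
  show ?thesis
    unfolding entropy_le_iff entropy_eq_iff
    using pstar_P Pset_nonneg[OF pstar_P] Pset_max conv_max mem_conv_hull[OF pstar_P]
      sum_pvec[OF admissible_initial_segments[OF n_le] M, folded pstar_eq_pvec]
    by (metis image_eqI)
qed

end
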